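(* Let $\mathbb F x$ be a one-dimensional vector space and $S(Lev,\mathbb F x)=\bigoplus_{n\ge1}(Lev(n)\otimes(\mathbb F x)^{\otimes n})_{\Sigma_n}$ the free level algebra on one generator. The linear map $S(Lev,\mathbb F x)\to\mathbb F[\mathrm{BHS}]$ sending the class of $I\otimes x^{\otimes n}$ ($I\in\mathscr L(n)$) to $(|I_0|,|I_1|,\dots)$ is an isomorphism of vector spaces, and it is an isomorphism of level algebras when $\mathbb F[\mathrm{BHS}]$ is given the bilinear extension of the product $(u,v)\mapsto u\cdot v$.
   Context: $[n]=\{1,\dots,n\}$. $\mathscr L(n)$: families $I=(I_i)_{i\ge0}$ of disjoint subsets of $[n]$ with union $[n]$ and $\sum_i|I_i|/2^i=1$, with $\Sigma_n$ acting by $\sigma\cdot I=(\sigma(I_i))_i$. Equivalently $I$ is the map $h:[n]\to\mathbb N$ with $h(x)=j$ iff $x\in I_j$. These form a set operad with unit $1\mapsto0$ and full composition $\mu(h\otimes g_1\otimes\dots\otimes g_n)$ sending $m_1+\dots+m_{j-1}+t$ ($1\le t\le m_j$) to $h(j)+g_j(t)$; $Lev=\mathbb F[\mathscr L]$ is the linear operad it spans, whose algebras are level algebras (vector spaces with a commutative bilinear product $*$ with $(a*b)*(c*d)=(a*c)*(b*d)$). The level product on the free algebra $S(Lev,\mathbb F x)$ is $a*b=\mu(h_2\otimes a\otimes b)$ with $h_2:[2]\to\mathbb N$ constant equal to $1$. $\mathrm{BHS}=\bigsqcup_{n\ge1}\mathrm{BHS}(n)$, $\mathrm{BHS}(n)=\{u\in\mathbb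 N^{\mathbb N}:\sum_iu(i)=n,\ \sum_iu(i)/2^i=1\}$; for $u,v\in\mathrm{BHS}$, $u\cdot v=(0,u(0)+v(0),u(1)+v(1),\dots)$. *)

theory Defs
  imports Complex_Main "HOL-Combinatorics.Permutations"
begin

text \<open>An element I of L(n) is encoded as the pair (n, h) with h : [n] -> N the
  level map (h x = j iff x in I_j), normalised by h x = 0 outside [n] = {1..n}.\<close>

definition level_fun :: "nat \<Rightarrow> (nat \<Rightarrow> nat) \<Rightarrow> bool" where
  "level_fun n h \<longleftrightarrow> (\<forall>x. x \<notin> {1..n} \<longrightarrow> h x = 0)
     \<and> (\<Sum>x\<in>{1..n}. (1/2::real) ^ h x) = 1"

definition LL :: "(nat \<times> (nat \<Rightarrow> nat)) set" where
  "LL = {(n, h). level_fun n h}"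

text \<open>Sigma_n action: sigma . I = (sigma(I_i))_i, i.e. h |-> h o sigma^{-1}.\<close>
definition perm_act :: "(nat \<Rightarrow> nat) \<Rightarrow> (nat \<Rightarrow> nat) \<Rightarrow> (nat \<Rightarrow> nat)" where
  "perm_act \<sigma> h = h \<circ> inv \<sigma>"

text \<open>Full operad composition mu(h (x) g_1 (x) ... (x) g_k); the g_j are given with
  their arities. comp_aux k h gs: the first element of gs is plugged into input k of h.\<close>
fun comp_aux :: "nat \<Rightarrow> (nat \<Rightarrow> nat) \<Rightarrow> (nat \<times> (nat \<Rightarrow> nat)) list \<Rightarrow> nat \<Rightarrow> nat" where
  "comp_aux k h [] x = 0"
| "comp_aux k h ((m, g) # gs) x =
     (if 1 \<le> x \<and> x \<le> m then h k + g x else comp_aux (Suc k) h gs (x - m))"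

definition op_comp :: "(nat \<times> (nat \<Rightarrow> nat)) \<Rightarrow> (nat \<times> (nat \<Rightarrow> nat)) list
    \<Rightarrow> (nat \<times> (nat \<Rightarrow> nat))" where
  "op_comp hh gs = (sum_list (map fst gs), comp_aux 1 (snd hh) gs)"

definition h2 :: "nat \<times> (nat \<Rightarrow> nat)" where
  "h2 = (2, \<lambda>x. if x \<in> {1, 2} then 1 else 0)"

definition level_mul :: "nat \<times> (nat \<Rightarrow> nat) \<Rightarrow> nat \<times> (nat \<Rightarrow> nat) \<Rightarrow> nat \<times> (nat \<Rightarrow> nat)" where
  "level_mul a b = op_comp h2 [a, b]"

definition bhs :: "nat \<Rightarrow> (nat \<Rightarrow> nat) \<Rightarrow> bool" where
  "bhs n u \<longleftrightarrow> finite {i. u i \<noteq> 0} \<and> (\<Sum>i\<in>{i. u i \<noteq> 0}. u i) = n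
     \<and> (\<Sum>i\<in>{i. u i \<noteq> 0}. real (u i) / 2 ^ i) = 1"

definition BHS :: "(nat \<Rightarrow> nat) set" where
  "BHS = {u. \<exists>n\<ge>1. bhs n u}"

definition bhs_mul :: "(nat \<Rightarrow> nat) \<Rightarrow> (nat \<Rightarrow> nat) \<Rightarrow> (nat \<Rightarrow> nat)" where
  "bhs_mul u v = (\<lambda>i. if i = 0 then 0 else u (i - 1) + v (i - 1))"

definition bhs_of :: "nat \<times> (nat \<Rightarrow> nat) \<Rightarrow> (nat \<Rightarrow> nat)" where
  "bhs_of p = (\<lambda>i. card {x \<in> {1..fst p}. snd p x = i})"

text \<open>Free vector space F[X]: finitely supported functions X -> F.\<close>
definition supp :: "('x \<Rightarrow> 'a::zero) \<Rightarrow> 'x set" where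
  "supp c = {x. c x \<noteq> 0}"

definition fin_supp_in :: "'x set \<Rightarrow> ('x \<Rightarrow> 'a::zero) \<Rightarrow> bool" where
  "fin_supp_in X c \<longleftrightarrow> finite (supp c) \<and> supp c \<subseteq> X"

definition delta :: "'x \<Rightarrow> 'x \<Rightarrow> 'a::{zero,one}" where
  "delta q p = (if p = q then 1 else 0)"

definition push :: "('x \<Rightarrow> 'y) \<Rightarrow> ('x \<Rightarrow> 'a::comm_monoid_add) \<Rightarrow> 'y \<Rightarrow> 'a" where
  "push f c y = (\<Sum>q\<in>supp c. if f q = y then c q else 0)"

definition fconv :: "('x \<Rightarrow> 'x \<Rightarrow> 'x) \<Rightarrow> ('x \<Rightarrow> 'a::comm_semiring_1) \<Rightarrow> ('x \<Rightarrow> 'a) \<Rightarrow> 'x \<Rightarrow> 'a" where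
  "fconv mul c d z = (\<Sum>(q, r)\<in>supp c \<times> supp d. if mul q r = z then c q * d r else 0)"

text \<open>The subspace of F[L(n)] (x) x^n, summed over n, spanned by sigma.(I (x) x^n) - I (x) x^n
  (permuting the tensor factors of x^n is trivial); the coinvariants are the quotient by it.\<close>
inductive_set coinv_span :: "(nat \<times> (nat \<Rightarrow> nat) \<Rightarrow> 'a::field) set" where
  zero: "(\<lambda>_. 0) \<in> coinv_span"
| step: "c \<in> coinv_span \<Longrightarrow> level_fun n h \<Longrightarrow> \<sigma> permutes {1..n} \<Longrightarrow>
    (\<lambda>p. c p + a * (delta (n, perm_act \<sigma> h) p - delta (n, h) p)) \<in> coinv_span"

end

theory Submission
  imports Defs
begin

text \<open>The fibre cardinalities of a level map h : [n] \<rightarrow> \<nat> form a BHS sequence, every BHS sequence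
  arises this way (fill [n] block by block), and two level maps have the same fibre cardinalities
  exactly when they differ by a permutation of [n]. Hence the linear extension of bhs_of is onto
  and its kernel is spanned by the differences \<sigma>\<cdot>I - I, i.e. it is the coinvariant relation.
  It is multiplicative already on basis elements: the fibre of \<mu>(h2 \<otimes> h \<otimes> g) at level j + 1
  is the disjoint union of the fibre of h and a shifted copy of the fibre of g at level j.\<close>

definition tensor :: "('x \<Rightarrow> 'a::comm_semiring_1) \<Rightarrow> ('y \<Rightarrow> 'a) \<Rightarrow> 'x \<times> 'y \<Rightarrow> 'a" where
  "tensor c d = (\<lambda>(q, r). c q * d r)"

lemma push_superset:
  assumes "finite A" "supp c \<subseteq> A"
  shows "push f c y = (\<Sum>q\<in>A. if f q = y then c q else 0)"
  unfolding push_def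
  by (rule sum.mono_neutral_left) (use assms in \<open>auto simp: supp_def\<close>)

lemma supp_push: "supp (push f c) \<subseteq> f ` supp c"
proof
  fix y assume "y \<in> supp (push f c)"
  then have "(\<Sum>q\<in>supp c. if f q = y then c q else 0) \<noteq> 0"
    by (simp add: supp_def push_def)
  then obtain q where "q \<in> supp c" "(if f q = y then c q else 0) \<noteq> 0"
    by (blast elim: sum.not_neutral_contains_not_neutral)
  then show "y \<in> f ` supp c" by (auto split: if_splits)
qed

lemma finite_supp_push: "finite (supp c) \<Longrightarrow> finite (supp (push f c))"
  by (erule finite_surj[OF _ supp_push])

lemma push_cong: "(\<And>q. q \<in> supp c \<Longrightarrow> f q = g q) \<Longrightarrow> push f c = push g c"
  unfolding push_def by (intro ext sum.cong) auto

lemma push_id: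
  assumes "finite (supp c)"
  shows "push (\<lambda>q. q) c = c"
proof
  fix y
  show "push (\<lambda>q. q) c y = c y"
    using assms by (simp add: push_def) (simp add: supp_def)
qed

lemma push_push:
  assumes fin: "finite (supp c)"
  shows "push g (push f c) = push (g \<circ> f) c"
proof
  fix z
  have "push g (push f c) z
      = (\<Sum>u\<in>f ` supp c. \<Sum>q\<in>supp c. if g u = z \<and> f q = u then c q else 0)"
    by (subst push_superset[OF finite_imageI[OF fin] supp_push])
      (auto simp: push_def intro!: sum.cong)
  also have "\<dots> = (\<Sum>q\<in>supp c. \<Sum>u\<in>f ` supp c. if u = f q then (if g (f q) = z then c q else 0) else 0)"
    by (subst sum.swap) (auto intro!: sum.cong)
  also have "\<dots> = push (g \<circ> f) c z"
    using fin by (simp add: push_def)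
  finally show "push g (push f c) z = push (g \<circ> f) c z" .
qed

lemma supp_tensor: "supp (tensor c d) \<subseteq> supp c \<times> supp d"
  by (auto simp: supp_def tensor_def)

lemma finite_supp_tensor: "finite (supp c) \<Longrightarrow> finite (supp d) \<Longrightarrow> finite (supp (tensor c d))"
  by (rule finite_subset[OF supp_tensor]) simp

lemma fconv_eq_push_tensor:
  assumes "finite (supp c)" "finite (supp d)"
  shows "fconv mul c d = push (\<lambda>(q, r). mul q r) (tensor c d)"
proof
  fix z
  show "fconv mul c d z = push (\<lambda>(q, r). mul q r) (tensor c d) z"
    unfolding push_superset[OF finite_cartesian_product[OF assms] supp_tensor] fconv_def
    by (intro sum.cong) (auto simp: tensor_def)
qed

lemma tensor_push:
  fixes c :: "'x \<Rightarrow> 'a::comm_semiring_1" and d :: "'y \<Rightarrow> 'a"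
  assumes fc: "finite (supp c)" and fd: "finite (supp d)"
  shows "tensor (push f c) (push g d) = push (map_prod f g) (tensor c d)"
proof (rule ext, clarify)
  fix u v
  have "tensor (push f c) (push g d) (u, v)
      = (\<Sum>q\<in>supp c. \<Sum>r\<in>supp d. (if f q = u then c q else 0) * (if g r = v then d r else 0))"
    unfolding tensor_def push_def by (simp add: sum_product)
  also have "\<dots> = (\<Sum>qr\<in>supp c \<times> supp d. if map_prod f g qr = (u, v) then tensor c d qr else 0)"
    unfolding sum.cartesian_product by (intro sum.cong) (auto simp: tensor_def)
  also have "\<dots> = push (map_prod f g) (tensor c d) (u, v)"
    using fc fd by (intro push_superset[symmetric] supp_tensor) simp
  finally show "tensor (push f c) (push g d) (u, v) = push (map_prod f g) (tensor c d) (u, v)" .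
qed

lemma push_fconv:
  fixes c d :: "'x \<Rightarrow> 'a::comm_semiring_1"
  assumes fc: "finite (supp c)" and fd: "finite (supp d)"
    and hom: "\<And>q r. q \<in> supp c \<Longrightarrow> r \<in> supp d \<Longrightarrow> f (mul q r) = mul' (f q) (f r)"
  shows "push f (fconv mul c d) = fconv mul' (push f c) (push f d)"
proof -
  have fin: "finite (supp (tensor c d))" using fc fd by (rule finite_supp_tensor)
  have "push f (fconv mul c d) = push (f \<circ> (\<lambda>(q, r). mul q r)) (tensor c d)"
    by (simp add: fconv_eq_push_tensor[OF fc fd] push_push[OF fin])
  also have "\<dots> = push ((\<lambda>(u, v). mul' u v) \<circ> map_prod f f) (tensor c d)"
    using supp_tensor[of c d] hom by (intro push_cong) fastforce
  also have "\<dots> = fconv mul' (push f c) (push f d)"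
    by (simp add: fconv_eq_push_tensor finite_supp_push fc fd tensor_push push_push fin)
  finally show ?thesis .
qed

lemma surj_push:
  assumes onto: "Y \<subseteq> f ` X" and d: "fin_supp_in Y d"
  shows "\<exists>c. fin_supp_in X c \<and> push f c = d"
proof -
  let ?c = "push (inv_into X f) d"
  have fd: "finite (supp d)" and sd: "supp d \<subseteq> Y" using d by (auto simp: fin_supp_in_def)
  have "supp ?c \<subseteq> inv_into X f ` supp d" by (rule supp_push)
  also have "\<dots> \<subseteq> X" using sd onto by (blast intro: inv_into_into)
  finally have c: "fin_supp_in X ?c"
    using finite_supp_push[OF fd] by (simp add: fin_supp_in_def)
  have "push f ?c = push (f \<circ> inv_into X f) d" by (rule push_push[OF fd])
  also have "\<dots> = push (\<lambda>u. u) d"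
    using sd onto by (intro push_cong) (metis comp_apply f_inv_into_f subsetD)
  also have "\<dots> = d" by (rule push_id[OF fd])
  finally show ?thesis using c by blast
qed

lemma supp_add_delta_diff:
  fixes c :: "'x \<Rightarrow> 'a::comm_ring_1"
  shows "supp (\<lambda>x. c x + a * (delta p x - delta q x)) \<subseteq> insert p (insert q (supp c))"
  by (auto simp: supp_def delta_def)

lemma push_add_delta_diff:
  fixes c :: "'x \<Rightarrow> 'a::comm_ring_1"
  assumes fin: "finite (supp c)" and eq: "f p = f q"
  shows "push f (\<lambda>x. c x + a * (delta p x - delta q x)) = push f c"
proof
  fix y
  let ?A = "insert p (insert q (supp c))"
  have fA: "finite ?A" using fin by simp
  have delta_sum: "(\<Sum>x\<in>?A. if f x = y then delta r x else 0) = (if f q = y then 1 else 0)"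
    if "r \<in> {p, q}" for r
  proof -
    have "(\<Sum>x\<in>?A. if f x = y then delta r x else 0) = (\<Sum>x\<in>?A. if r = x then (if f r = y then 1 else 0) else 0)"
      by (rule sum.cong) (auto simp: delta_def)
    then show ?thesis using fA that eq by auto
  qed
  have "push f (\<lambda>x. c x + a * (delta p x - delta q x)) y
      = (\<Sum>x\<in>?A. if f x = y then c x else 0)
        + a * ((\<Sum>x\<in>?A. if f x = y then delta p x else 0) - (\<Sum>x\<in>?A. if f x = y then delta q x else 0))"
    unfolding push_superset[OF fA supp_add_delta_diff] sum_subtractf[symmetric]
      sum_distrib_left sum.distrib[symmetric]
    by (rule sum.cong) auto
  also have "\<dots> = push f c y"
    by (simp add: delta_sum push_superset[OF fA, of c] subset_insertI2)
  finally show "push f (\<lambda>x. c x + a * (delta p x - delta q x)) y = push f c y" .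
qed

lemma push_eq_zero_imp_collision:
  assumes fin: "finite (supp c)" and zero: "push f c = (\<lambda>_. 0)" and p: "p \<in> supp c"
  shows "\<exists>q\<in>supp c. q \<noteq> p \<and> f q = f p"
proof (rule ccontr)
  assume "\<not> ?thesis"
  then have "push f c (f p) = (\<Sum>q\<in>supp c. if q = p then c p else 0)"
    unfolding push_def by (intro sum.cong) auto
  also have "\<dots> = c p" using fin p by simp
  finally show False using zero p by (simp add: supp_def)
qed

lemma level_mul_Pair:
  "level_mul (n, h) (m, g) = (n + m, \<lambda>x. if 1 \<le> x \<and> x \<le> n then 1 + h x
      else if 1 \<le> x - n \<and> x - n \<le> m then 1 + g (x - n) else 0)"
  by (auto simp: level_mul_def op_comp_def h2_def fun_eq_iff)

lemma bhs_of_level_mul: "bhs_of (level_mul p q) = bhs_mul (bhs_of p) (bhs_of q)"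
proof
  fix i
  obtain n h m g where pq: "p = (n, h)" "q = (m, g)" by fastforce
  define F where "F x = (if 1 \<le> x \<and> x \<le> n then 1 + h x
      else if 1 \<le> x - n \<and> x - n \<le> m then 1 + g (x - n) else 0)" for x
  have lm: "level_mul p q = (n + m, F)" unfolding pq F_def by (rule level_mul_Pair)
  show "bhs_of (level_mul p q) i = bhs_mul (bhs_of p) (bhs_of q) i"
  proof (cases i)
    case 0
    then have "{x \<in> {1..n + m}. F x = i} = {}" by (auto simp: F_def)
    then show ?thesis using 0 by (simp add: lm bhs_of_def bhs_mul_def)
  next
    case (Suc j)
    let ?P = "{x \<in> {1..n}. h x = j}" and ?Q = "{y \<in> {1..m}. g y = j}"
    have fibre: "{x \<in> {1..n + m}. F x = i} = ?P \<union> (\<lambda>y. y + n) ` ?Q"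
    proof (intro equalityI subsetI)
      fix x assume x: "x \<in> {x \<in> {1..n + m}. F x = i}"
      show "x \<in> ?P \<union> (\<lambda>y. y + n) ` ?Q"
      proof (cases "x \<le> n")
        case False
        then have "x - n \<in> ?Q" using x Suc by (auto simp: F_def split: if_splits)
        then show ?thesis using False by (auto intro!: image_eqI[of x _ "x - n"])
      qed (use x Suc in \<open>auto simp: F_def\<close>)
    qed (use Suc in \<open>auto simp: F_def\<close>)
    have "card {x \<in> {1..n + m}. F x = i} = card ?P + card ((\<lambda>y. y + n) ` ?Q)"
      unfolding fibre by (rule card_Un_disjoint) auto
    also have "card ((\<lambda>y. y + n) ` ?Q) = card ?Q" by (simp add: card_image)
    finally show ?thesis using Suc unfolding lm by (simp add: pq bhs_of_def bhs_mul_def)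
  qed
qed

lemma bhs_of_perm_act:
  assumes "\<sigma> permutes {1..n}"
  shows "bhs_of (n, perm_act \<sigma> h) = bhs_of (n, h)"
proof
  fix i
  have \<tau>: "inv \<sigma> permutes {1..n}" using assms by (rule permutes_inv)
  have "{x \<in> {1..n}. h (inv \<sigma> x) = i} = \<sigma> ` {y \<in> {1..n}. h y = i}"
    using permutes_inverses[OF assms] permutes_in_image[OF assms] permutes_in_image[OF \<tau>]
    by (auto intro!: image_eqI[where x = "inv \<sigma> _"])
  also have "card \<dots> = card {y \<in> {1..n}. h y = i}"
    using permutes_inj[OF assms] by (simp add: card_image inj_on_def)
  finally show "bhs_of (n, perm_act \<sigma> h) i = bhs_of (n, h) i"
    by (simp add: bhs_of_def perm_act_def)
qed

lemma support_bhs_of: "{i. bhs_of (n, h) i \<noteq> 0} = h ` {1..n}"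
  by (auto simp: bhs_of_def)

lemma sum_bhs_of: "(\<Sum>i\<in>{i. bhs_of (n, h) i \<noteq> 0}. bhs_of (n, h) i) = n"
proof -
  have "n = (\<Sum>i\<in>h ` {1..n}. \<Sum>x\<in>{x \<in> {1..n}. h x = i}. 1)"
    using sum.image_gen[of "{1..n}" "\<lambda>_. 1 :: nat" h] by simp
  then show ?thesis unfolding support_bhs_of by (simp add: bhs_of_def)
qed

lemma weighted_sum_bhs_of:
  "(\<Sum>i\<in>{i. bhs_of (n, h) i \<noteq> 0}. real (bhs_of (n, h) i) / 2 ^ i) = (\<Sum>x\<in>{1..n}. (1/2) ^ h x)"
proof -
  have "(\<Sum>x\<in>{1..n}. (1/2::real) ^ h x) = (\<Sum>i\<in>h ` {1..n}. \<Sum>x\<in>{x \<in> {1..n}. h x = i}. (1/2) ^ h x)"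
    by (rule sum.image_gen) simp
  also have "\<dots> = (\<Sum>i\<in>h ` {1..n}. real (bhs_of (n, h) i) / 2 ^ i)"
    by (intro sum.cong refl) (simp add: bhs_of_def power_one_over)
  finally show ?thesis unfolding support_bhs_of ..
qed

lemma level_fun_imp_bhs: "level_fun n h \<Longrightarrow> bhs n (bhs_of (n, h))"
  using sum_bhs_of[of n h] weighted_sum_bhs_of[of n h]
  unfolding bhs_def level_fun_def support_bhs_of by simp

lemma level_fun_arity_pos: "level_fun n h \<Longrightarrow> 1 \<le> n"
  by (cases n) (auto simp: level_fun_def)

lemma exists_map_with_fibre_cards:
  fixes u :: "nat \<Rightarrow> nat"
  assumes "finite S" and "\<And>i. i \<notin> S \<Longrightarrow> u i = 0"
  shows "\<exists>h. (\<forall>x. x \<notin> {1..sum u S} \<longrightarrow> h x = 0) \<and> (\<forall>i. card {x \<in> {1..sum u S}. h x = i} = u i)"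
  using assms
proof (induction S arbitrary: u rule: finite_induct)
  case empty
  then show ?case by (intro exI[of _ "\<lambda>_. 0"]) auto
next
  case (insert a S)
  let ?n = "sum u S"
  have "sum (u(a := 0)) S = ?n" using insert.hyps(2) by (intro sum.cong) auto
  moreover have "\<And>i. i \<notin> S \<Longrightarrow> (u(a := 0)) i = 0" using insert.prems by simp
  ultimately obtain h' where h'_zero: "\<forall>x. x \<notin> {1..?n} \<longrightarrow> h' x = 0"
    and h'_card: "\<forall>i. card {x \<in> {1..?n}. h' x = i} = (u(a := 0)) i"
    using insert.IH[of "u(a := 0)"] by auto
  have "finite {x \<in> {1..?n}. h' x = a}" by simp
  then have no_a: "{x \<in> {1..?n}. h' x = a} = {}"
    using h'_card by (metis card_0_eq fun_upd_same)
  let ?h = "\<lambda>x. if ?n < x \<and> x \<le> ?n + u a then a else h' x"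
  have "card {x \<in> {1..?n + u a}. ?h x = i} = u i" for i
  proof (cases "i = a")
    case True
    have "{x \<in> {1..?n + u a}. ?h x = a} = {?n<..?n + u a}"
    proof (intro equalityI subsetI)
      fix x assume x: "x \<in> {x \<in> {1..?n + u a}. ?h x = a}"
      show "x \<in> {?n<..?n + u a}"
      proof (rule ccontr)
        assume "x \<notin> {?n<..?n + u a}"
        then have "x \<in> {x \<in> {1..?n}. h' x = a}" using x by auto
        then show False using no_a by blast
      qed
    qed auto
    then show ?thesis using True by simp
  next
    case False
    then have "{x \<in> {1..?n + u a}. ?h x = i} = {x \<in> {1..?n}. h' x = i}" by auto
    then show ?thesis using h'_card False by simp
  qed
  moreover have "sum u (insert a S) = ?n + u a" using insert.hyps by simp
  ultimately show ?case using h'_zero by (intro exI[of _ ?h]) auto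
qed

lemma bhs_of_image_LL: "bhs_of ` LL = BHS"
proof (intro equalityI subsetI)
  fix u assume "u \<in> bhs_of ` LL"
  then obtain n h where "level_fun n h" "u = bhs_of (n, h)" by (auto simp: LL_def)
  then show "u \<in> BHS"
    unfolding BHS_def using level_fun_imp_bhs level_fun_arity_pos by blast
next
  fix u assume "u \<in> BHS"
  then obtain n where "bhs n u" unfolding BHS_def by blast
  then have fin: "finite {i. u i \<noteq> 0}" and n: "sum u {i. u i \<noteq> 0} = n"
    and weights: "(\<Sum>i\<in>{i. u i \<noteq> 0}. real (u i) / 2 ^ i) = 1"
    by (auto simp: bhs_def)
  obtain h where h_zero: "\<forall>x. x \<notin> {1..n} \<longrightarrow> h x = 0"
    and h_card: "\<forall>i. card {x \<in> {1..n}. h x = i} = u i"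
    using exists_map_with_fibre_cards[OF fin, where u = u, unfolded n] by auto
  have u: "bhs_of (n, h) = u" using h_card by (simp add: bhs_of_def fun_eq_iff)
  then have "level_fun n h"
    using h_zero weights weighted_sum_bhs_of[of n h] by (simp add: level_fun_def)
  then show "u \<in> bhs_of ` LL" using u by (auto simp: LL_def)
qed

lemma exists_permutes_of_eq_bhs_of:
  fixes h g :: "nat \<Rightarrow> nat"
  assumes h_zero: "\<And>x. x \<notin> {1..n} \<Longrightarrow> h x = 0" and g_zero: "\<And>x. x \<notin> {1..n} \<Longrightarrow> g x = 0"
    and eq: "bhs_of (n, h) = bhs_of (n, g)"
  shows "\<exists>\<tau>. \<tau> permutes {1..n} \<and> g = h \<circ> \<tau>"
proof -
  let ?A = "\<lambda>i. {x \<in> {1..n}. h x = i}" and ?B = "\<lambda>i. {x \<in> {1..n}. g x = i}"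
  have "card (?B i) = card (?A i)" for i using fun_cong[OF eq, of i] by (simp add: bhs_of_def)
  then have "\<forall>i. \<exists>b. bij_betw b (?B i) (?A i)"
    by (auto intro: finite_same_card_bij)
  then obtain b where b: "\<And>i. bij_betw (b i) (?B i) (?A i)" by metis
  define \<tau> where "\<tau> x = (if x \<in> {1..n} then b (g x) x else x)" for x
  have \<tau>_fibre: "\<tau> x \<in> ?A (g x)" if "x \<in> {1..n}" for x
    using that bij_betwE[OF b] by (simp add: \<tau>_def)
  have inj: "inj_on \<tau> {1..n}"
  proof (rule inj_onI)
    fix x y assume xy: "x \<in> {1..n}" "y \<in> {1..n}" "\<tau> x = \<tau> y"
    then have "g x = g y" using \<tau>_fibre[OF xy(1)] \<tau>_fibre[OF xy(2)] by simp
    then show "x = y"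
      using xy bij_betw_imp_inj_on[OF b] by (auto simp: \<tau>_def dest: inj_onD)
  qed
  moreover have "\<tau> ` {1..n} = {1..n}"
    by (rule endo_inj_surj) (use \<tau>_fibre inj in auto)
  ultimately have "\<tau> permutes {1..n}"
    by (intro bij_imp_permutes) (auto simp: bij_betw_def \<tau>_def)
  moreover have "g = h \<circ> \<tau>"
    using \<tau>_fibre h_zero g_zero by (auto simp: \<tau>_def fun_eq_iff)
  ultimately show ?thesis by blast
qed

lemma LL_eq_bhs_of_imp_perm_act:
  assumes "(n, h) \<in> LL" "(m, g) \<in> LL" "bhs_of (n, h) = bhs_of (m, g)"
  shows "m = n \<and> (\<exists>\<sigma>. \<sigma> permutes {1..n} \<and> h = perm_act \<sigma> g)"
proof
  show "m = n" using sum_bhs_of[of n h] sum_bhs_of[of m g] assms(3) by simp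
  then obtain \<tau> where \<tau>: "\<tau> permutes {1..n}" "h = g \<circ> \<tau>"
    using exists_permutes_of_eq_bhs_of[of n g h] assms by (auto simp: LL_def level_fun_def)
  have "perm_act (inv \<tau>) g = h"
    using \<tau> by (simp add: perm_act_def inv_inv_eq permutes_bij)
  then show "\<exists>\<sigma>. \<sigma> permutes {1..n} \<and> h = perm_act \<sigma> g"
    using permutes_inv[OF \<tau>(1)] by metis
qed

lemma coinv_span_imp_push_bhs_of_eq_zero:
  "c \<in> coinv_span \<Longrightarrow> finite (supp c) \<and> push bhs_of c = (\<lambda>_. 0)"
proof (induction rule: coinv_span.induct)
  case zero
  show ?case by (simp add: supp_def push_def fun_eq_iff)
next
  case (step c n h \<sigma> a)
  have fin: "finite (supp c)" and zero: "push bhs_of c = (\<lambda>_. 0)" using step.IH by simp_all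
  have "finite (supp (\<lambda>x. c x + a * (delta (n, perm_act \<sigma> h) x - delta (n, h) x)))"
    by (rule finite_subset[OF supp_add_delta_diff]) (use fin in simp)
  moreover have "push bhs_of (\<lambda>x. c x + a * (delta (n, perm_act \<sigma> h) x - delta (n, h) x)) = (\<lambda>_. 0)"
    using push_add_delta_diff[where f = bhs_of, OF fin bhs_of_perm_act[OF step.hyps(3)]] zero
    by simp
  ultimately show ?case ..
qed

lemma push_bhs_of_eq_zero_imp_coinv_span:
  fixes c :: "nat \<times> (nat \<Rightarrow> nat) \<Rightarrow> 'a::field"
  shows "fin_supp_in LL c \<Longrightarrow> push bhs_of c = (\<lambda>_. 0) \<Longrightarrow> c \<in> coinv_span"
proof (induction "card (supp c)" arbitrary: c rule: less_induct)
  case less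
  have fin: "finite (supp c)" and LL: "supp c \<subseteq> LL"
    using less.prems(1) by (auto simp: fin_supp_in_def)
  show ?case
  proof (cases "supp c = {}")
    case True
    then have "c = (\<lambda>_. 0)" by (auto simp: supp_def)
    then show ?thesis by (simp add: coinv_span.zero)
  next
    case False
    then obtain p where p: "p \<in> supp c" by blast
    obtain q where q: "q \<in> supp c" "q \<noteq> p" "bhs_of q = bhs_of p"
      using push_eq_zero_imp_collision[OF fin less.prems(2) p] by blast
    \<comment> \<open>move the coefficient of p onto q, which has the same image: this kills p\<close>
    define c' where "c' x = c x + c p * (delta q x - delta p x)" for x
    have "supp c' \<subseteq> supp c - {p}"
      using q(1,2) by (auto simp: supp_def c'_def delta_def)
    then have "fin_supp_in LL c'" and "card (supp c') < card (supp c)"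
      using fin LL p by (auto simp: fin_supp_in_def intro: finite_subset psubset_card_mono)
    moreover have "push bhs_of c' = (\<lambda>_. 0)"
      using push_add_delta_diff[where f = bhs_of, OF fin q(3)] less.prems(2)
      by (simp add: c'_def[abs_def])
    ultimately have c': "c' \<in> coinv_span" using less.hyps by blast
    obtain n h m g where pq: "p = (n, h)" "q = (m, g)" by fastforce
    then obtain \<sigma> where "m = n" "\<sigma> permutes {1..n}" "h = perm_act \<sigma> g"
      using LL_eq_bhs_of_imp_perm_act[of n h m g] LL p q by auto
    moreover have "level_fun m g" using LL q(1) pq by (auto simp: LL_def)
    ultimately have "(\<lambda>x. c' x + c p * (delta p x - delta q x)) \<in> coinv_span"
      using coinv_span.step[OF c'] pq by simp
    moreover have "(\<lambda>x. c' x + c p * (delta p x - delta q x)) = c"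
      by (simp add: c'_def fun_eq_iff algebra_simps)
    ultimately show ?thesis by simp
  qed
qed

theorem proposition6p7:
  shows "(\<forall>p\<in>LL. bhs_of p \<in> BHS)
    \<and> (\<forall>d :: (nat \<Rightarrow> nat) \<Rightarrow> 'a::field. fin_supp_in BHS d \<longrightarrow>
          (\<exists>c. fin_supp_in LL c \<and> push bhs_of c = d))
    \<and> (\<forall>c :: nat \<times> (nat \<Rightarrow> nat) \<Rightarrow> 'a. fin_supp_in LL c \<longrightarrow>
          (push bhs_of c = (\<lambda>_. 0) \<longleftrightarrow> c \<in> coinv_span))
    \<and> (\<forall>c d :: nat \<times> (nat \<Rightarrow> nat) \<Rightarrow> 'a. fin_supp_in LL c \<longrightarrow> fin_supp_in LL d \<longrightarrow>
          push bhs_of (fconv level_mul c d) = fconv bhs_mul (push bhs_of c) (push bhs_of d))"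
proof (intro conjI allI impI ballI)
  fix p assume "p \<in> LL"
  then show "bhs_of p \<in> BHS" unfolding bhs_of_image_LL[symmetric] by (rule imageI)
next
  fix d :: "(nat \<Rightarrow> nat) \<Rightarrow> 'a" assume "fin_supp_in BHS d"
  then show "\<exists>c. fin_supp_in LL c \<and> push bhs_of c = d"
    by (rule surj_push[OF equalityD2[OF bhs_of_image_LL]])
next
  fix c :: "nat \<times> (nat \<Rightarrow> nat) \<Rightarrow> 'a" assume "fin_supp_in LL c"
  then show "push bhs_of c = (\<lambda>_. 0) \<longleftrightarrow> c \<in> coinv_span"
    using push_bhs_of_eq_zero_imp_coinv_span[of c] coinv_span_imp_push_bhs_of_eq_zero[of c]
    by (intro iffI) simp_all
next
  fix c d :: "nat \<times> (nat \<Rightarrow> nat) \<Rightarrow> 'a" assume "fin_supp_in LL c" "fin_supp_in LL d"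
  then show "push bhs_of (fconv level_mul c d) = fconv bhs_mul (push bhs_of c) (push bhs_of d)"
    by (intro push_fconv) (auto simp: fin_supp_in_def bhs_of_level_mul)
qed

end
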